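(* Let $n,p\in\mathbb{N}$, $0\le\lambda\le1$. Let $f$ be analytic in $\mathrm{U}=\{|z|<1\}$ of the form $f(z)=z^p+\sum_{k=p+n}^\infty a_kz^k$, put $\mathcal{F}_\lambda(z)=(1-\lambda)f(z)+\lambda zf'(z)$, and assume $\mathcal{F}_\lambda(z)\mathcal{F}_\lambda'(z)\neq0$ for all $z\in\mathrm{U}\setminus\{0\}$. Let $M\ge 1/p$. If $$\operatorname{Re}\left[\frac{z\mathcal{F}_\lambda'(z)}{\mathcal{F}_\lambda(z)}-1-\frac{z\mathcal{F}_\lambda''(z)}{\mathcal{F}_\lambda'(z)}\right]<\frac{nMp}{Mp+1},\quad z\in\mathrm{U},$$ then $$\left|\frac{\mathcal{F}_\lambda(z)}{z\mathcal{F}_\lambda'(z)}-\frac1p\right|<M,\quad z\in\mathrm{U}.$$ *)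

theory Defs
  imports "HOL-Complex_Analysis.Complex_Analysis"
begin

definition Flam :: "real \<Rightarrow> (complex \<Rightarrow> complex) \<Rightarrow> complex \<Rightarrow> complex" where
  "Flam lam f = (\<lambda>z. (1 - of_real lam) * f z + of_real lam * z * deriv f z)"

end

theory Submission
  imports Defs
begin

text \<open>
  From the series, F = Flam lam f factors as F(z) = z^p (c + z^n K(z)) with
  c = 1 - lam + lam p \<noteq> 0, hence w(z) = F(z)/(z F'(z)) - 1/p = z^n Q(z) with Q holomorphic
  in the disc. If |w| \<ge> M somewhere, take z0 of least modulus with |w(z0)| = M. Then |Q| is
  maximal on the closed disc of radius |z0| at the boundary point z0, which forces
  z0 Q'(z0)/Q(z0) \<ge> 0, so z0 w'(z0) = k w(z0) with k real and k \<ge> n (Jack's lemma).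
  The expression in the hypothesis is the logarithmic derivative z w'/(w + 1/p) of F/(zF');
  at z0 it equals k u/(u + 1) with u = p w(z0), |u| = Mp \<ge> 1, so its real part is at least
  n Mp/(Mp + 1), a contradiction.
\<close>

lemma Re_div_add_one_ge:
  fixes u :: complex and \<rho> :: real
  assumes u: "cmod u = \<rho>" and \<rho>: "\<rho> \<ge> 1" and u1: "u + 1 \<noteq> 0"
  shows "\<rho> / (\<rho> + 1) \<le> Re (u / (u + 1))"
proof -
  have \<rho>2: "\<rho>\<^sup>2 = (Re u)\<^sup>2 + (Im u)\<^sup>2" using u cmod_power2[of u] by simp
  have "Re u \<le> \<rho>" using complex_Re_le_cmod[of u] u by simp
  hence num: "\<rho> * (\<rho>\<^sup>2 + 2 * Re u + 1) \<le> (\<rho>\<^sup>2 + Re u) * (\<rho> + 1)"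
    using \<rho> mult_nonneg_nonneg[of "\<rho> - 1" "\<rho> - Re u"] by (simp add: power2_eq_square algebra_simps)
  have den: "(cmod (u + 1))\<^sup>2 = \<rho>\<^sup>2 + 2 * Re u + 1"
    unfolding cmod_power2 using \<rho>2 by (simp add: power2_eq_square algebra_simps)
  hence den_pos: "\<rho>\<^sup>2 + 2 * Re u + 1 > 0" using u1 by (metis zero_less_norm_iff zero_less_power)
  have "Re (u / (u + 1)) = (Re u * Re (u + 1) + Im u * Im (u + 1)) / (cmod (u + 1))\<^sup>2"
    by (simp add: Re_divide cmod_power2)
  also have "\<dots> = (\<rho>\<^sup>2 + Re u) / (\<rho>\<^sup>2 + 2 * Re u + 1)"
    using \<rho>2 den by (simp add: power2_eq_square algebra_simps)
  also have "\<rho> / (\<rho> + 1) \<le> \<dots>"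
    using num den_pos \<rho> by (simp add: field_simps)
  finally show ?thesis .
qed

lemma Re_mult_div_add_inverse_ge:
  fixes q :: complex and k M :: real and p :: nat
  assumes q: "cmod q = M" and Mp: "1 \<le> M * p" and k: "0 \<le> k" and nz: "q + 1 / of_nat p \<noteq> 0"
  shows "k * (M * p / (M * p + 1)) \<le> Re (of_real k * q / (q + 1 / of_nat p))"
proof -
  have "p > 0" using Mp by (auto intro: Nat.gr0I)
  have Re_scale: "Re (of_real k * w) = k * Re w" for w by simp
  have "M * p / (M * p + 1) \<le> Re (of_nat p * q / (of_nat p * q + 1))"
    using q Mp nz \<open>p > 0\<close> by (intro Re_div_add_one_ge) (auto simp: norm_mult field_simps)
  hence "k * (M * p / (M * p + 1)) \<le> Re (of_real k * (of_nat p * q / (of_nat p * q + 1)))"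
    unfolding Re_scale using k by (rule mult_left_mono)
  also have "of_nat p * q / (of_nat p * q + 1) = q / (q + 1 / of_nat p)"
    using \<open>p > 0\<close> by (simp add: field_simps)
  finally show ?thesis by simp
qed

lemma eventually_norm_one_plus_le_one:
  fixes d :: complex
  assumes "Re d < 0"
  shows "\<forall>\<^sub>F s in at_right 0. cmod (1 + of_real s * d) \<le> 1"
proof -
  define b where "b = - 2 * Re d / (cmod d)\<^sup>2"
  have "d \<noteq> 0" using assms by auto
  hence "b > 0" using assms by (simp add: b_def divide_neg_pos)
  have "cmod (1 + of_real s * d) \<le> 1" if s: "0 < s" "s < b" for s
  proof -
    have "s * (cmod d)\<^sup>2 \<le> - 2 * Re d"
      using s \<open>d \<noteq> 0\<close> mult_strict_right_mono[of s b "(cmod d)\<^sup>2"] by (auto simp: b_def)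
    hence "s * (s * (cmod d)\<^sup>2) \<le> s * (- 2 * Re d)" using s by (intro mult_left_mono) auto
    hence "(cmod (1 + of_real s * d))\<^sup>2 \<le> 1"
      using s unfolding cmod_power2 by (simp add: power2_eq_square algebra_simps mult_left_mono)
    thus ?thesis by (simp add: power_le_one_iff)
  qed
  thus ?thesis using \<open>b > 0\<close> by (auto simp: eventually_at_right[OF \<open>b > 0\<close>])
qed

lemma eventually_norm_increases_along_direction:
  fixes Q :: "complex \<Rightarrow> complex"
  assumes der: "(Q has_field_derivative D) (at z0)" and Qz0: "Q z0 \<noteq> 0"
    and pos: "0 < Re (D * c / Q z0)"
  shows "\<forall>\<^sub>F s in at_right 0. cmod (Q z0) < cmod (Q (z0 + of_real s * c))"
proof -
  define \<phi> where "\<phi> s = Re (Q (z0 + of_real s * c) / Q z0)" for s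
  have "((\<lambda>w. Q (z0 + w * c) / Q z0) has_field_derivative D * c / Q z0) (at (of_real 0))"
  proof -
    have "((\<lambda>w. z0 + w * c) has_field_derivative c) (at 0)"
      by (auto intro!: derivative_eq_intros)
    from DERIV_chain2[of Q D, OF _ this] der
    have "((\<lambda>w. Q (z0 + w * c)) has_field_derivative D * c) (at 0)" by simp
    from DERIV_cdivide[OF this, of "Q z0"] show ?thesis by simp
  qed
  hence "(\<phi> has_real_derivative Re (D * c / Q z0)) (at 0)"
    unfolding \<phi>_def by (intro has_field_derivative_Re has_vector_derivative_real_field)
  from DERIV_pos_inc_right[OF this pos]
  obtain \<delta> where "\<delta> > 0" and inc: "\<forall>s>0. s < \<delta> \<longrightarrow> \<phi> 0 < \<phi> (0 + s)"
    by blast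
  have "cmod (Q z0) < cmod (Q (z0 + of_real s * c))" if "0 < s" "s < \<delta>" for s
  proof -
    have "1 < Re (Q (z0 + of_real s * c) / Q z0)"
      using inc that Qz0 by (simp add: \<phi>_def)
    also have "\<dots> \<le> cmod (Q (z0 + of_real s * c)) / cmod (Q z0)"
      by (metis complex_Re_le_cmod norm_divide)
    finally show ?thesis using Qz0 by (simp add: field_simps)
  qed
  thus ?thesis using \<open>\<delta> > 0\<close> by (auto simp: eventually_at_right[OF \<open>\<delta> > 0\<close>])
qed

lemma direction_Re_mult_pos:
  fixes A :: complex
  assumes A: "A \<noteq> of_real (cmod A)"
  obtains d where "Re d < 0" "0 < Re (A * d)"
proof
  have "Re A \<noteq> cmod A"
  proof
    assume e: "Re A = cmod A"
    hence "Im A = 0" using cmod_power2[of A] by simp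
    thus False using A e by (simp add: complex_eq_iff)
  qed
  hence ReA: "Re A < cmod A" using complex_Re_le_cmod[of A] by simp
  show "Re (cnj A - of_real (cmod A)) < 0" using ReA by simp
  have "Re (A * (cnj A - of_real (cmod A))) = cmod A * (cmod A - Re A)"
    by (simp add: cmod_def power2_eq_square algebra_simps)
  also have "\<dots> > 0" using ReA by (intro mult_pos_pos) auto
  finally show "0 < Re (A * (cnj A - of_real (cmod A)))" .
qed

lemma logderiv_nonneg_at_boundary_max:
  fixes Q :: "complex \<Rightarrow> complex"
  assumes hol: "Q holomorphic_on S" and S: "open S" "cball 0 r \<subseteq> S"
    and z0: "norm z0 = r" and Qz0: "Q z0 \<noteq> 0"
    and max: "\<And>z. z \<in> cball 0 r \<Longrightarrow> cmod (Q z) \<le> cmod (Q z0)"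
  obtains k where "k \<ge> 0" "z0 * deriv Q z0 = of_real k * Q z0"
proof -
  define A where "A = z0 * deriv Q z0 / Q z0"
  have A_real: "A = of_real (cmod A)"
  proof (rule ccontr)
    assume "A \<noteq> of_real (cmod A)"
    then obtain d where "Re d < 0" and "0 < Re (A * d)"
      by (rule direction_Re_mult_pos)
    \<comment> \<open>moving from z0 in direction z0 d enlarges |Q| to first order, yet stays in the disc\<close>
    hence "0 < Re (deriv Q z0 * (z0 * d) / Q z0)" by (simp add: A_def mult_ac)
    moreover have "(Q has_field_derivative deriv Q z0) (at z0)"
      using hol S z0 by (auto intro!: holomorphic_derivI)
    ultimately have "\<forall>\<^sub>F s in at_right 0. cmod (Q z0) < cmod (Q (z0 + of_real s * (z0 * d)))"
      using eventually_norm_increases_along_direction Qz0 by blast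
    moreover have "\<forall>\<^sub>F s in at_right 0. cmod (1 + of_real s * d) \<le> 1 \<and> s > 0"
      using eventually_norm_one_plus_le_one[OF \<open>Re d < 0\<close>] eventually_at_right_less
      by (rule eventually_conj)
    ultimately obtain s where
      grow: "cmod (Q z0) < cmod (Q (z0 + of_real s * (z0 * d)))" and "cmod (1 + of_real s * d) \<le> 1"
      using eventually_happens'[OF trivial_limit_at_right_real eventually_conj] by blast
    have "z0 + of_real s * (z0 * d) = z0 * (1 + of_real s * d)"
      by (simp add: algebra_simps)
    hence "norm (z0 + of_real s * (z0 * d)) = r * cmod (1 + of_real s * d)"
      using z0 by (simp add: norm_mult)
    also have "\<dots> \<le> r"
      using \<open>cmod (1 + of_real s * d) \<le> 1\<close> z0 by (intro mult_left_le) auto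
    finally have "cmod (Q (z0 + of_real s * (z0 * d))) \<le> cmod (Q z0)"
      by (intro max) simp
    thus False using grow by simp
  qed
  have "z0 * deriv Q z0 = A * Q z0" using Qz0 by (simp add: A_def)
  with A_real show ?thesis using that[of "cmod A"] by (metis norm_ge_zero)
qed

lemma z_times_deriv_power_mult:
  fixes h F :: "complex \<Rightarrow> complex"
  assumes h: "h holomorphic_on S" and S: "open S" "z \<in> S"
    and F: "\<And>w. w \<in> S \<Longrightarrow> F w = c + w ^ m * h w"
  shows "z * deriv F z = z ^ m * (of_nat m * h z + z * deriv h z)"
proof -
  have "(h has_field_derivative deriv h z) (at z)"
    using h S by (auto intro!: holomorphic_derivI)
  hence "((\<lambda>w. c + w ^ m * h w) has_field_derivative
           of_nat m * z ^ (m - 1) * h z + z ^ m * deriv h z) (at z)"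
    by (auto intro!: derivative_eq_intros)
  hence "(F has_field_derivative of_nat m * z ^ (m - 1) * h z + z ^ m * deriv h z) (at z)"
    by (rule has_field_derivative_transform_within_open[OF _ S]) (simp add: F)
  hence "deriv F z = of_nat m * z ^ (m - 1) * h z + z ^ m * deriv h z"
    by (rule DERIV_imp_deriv)
  thus ?thesis by (cases m) (simp_all add: algebra_simps)
qed

lemma extremal_point_of_level_set:
  fixes q :: "complex \<Rightarrow> complex"
  assumes q: "continuous_on (ball 0 R) q" and q0: "cmod (q 0) < M"
    and z1: "z1 \<in> ball 0 R" "M \<le> cmod (q z1)"
  obtains z0 where "z0 \<in> ball 0 R" "z0 \<noteq> 0" "cmod (q z0) = M"
    "\<And>z. z \<in> cball 0 (norm z0) \<Longrightarrow> cmod (q z) \<le> M"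
proof -
  have cont: "continuous_on (cball 0 r) (\<lambda>z. cmod (q z))" if "r < R" for r
    using that by (intro continuous_on_norm continuous_on_subset[OF q]) (simp add: cball_subset_ball_iff)
  define T where "T = cball 0 (norm z1) \<inter> (\<lambda>z. cmod (q z)) -` {M..}"
  have "closed T" unfolding T_def
    using z1 by (intro continuous_closed_preimage cont) auto
  hence "compact T" by (simp add: compact_eq_bounded_closed T_def bounded_Int)
  moreover have "z1 \<in> T" using z1 by (simp add: T_def)
  ultimately have "\<exists>z0\<in>T. \<forall>z\<in>T. norm z0 \<le> norm z"
    by (intro continuous_attains_inf continuous_on_norm_id) auto
  then obtain z0 where z0T: "z0 \<in> T" and min: "\<And>z. z \<in> T \<Longrightarrow> norm z0 \<le> norm z"
    by blast
  have "z0 \<noteq> 0" using z0T q0 by (auto simp: T_def)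
  have "z0 \<in> ball 0 R" using z0T z1 by (auto simp: T_def)
  have below: "cmod (q z) < M" if "norm z < norm z0" for z
  proof (rule ccontr)
    assume "\<not> cmod (q z) < M"
    hence "z \<in> T" using that z0T by (simp add: T_def)
    with min that show False by fastforce
  qed
  define U where "U = cball 0 (norm z0) \<inter> (\<lambda>z. cmod (q z)) -` {..M}"
  have "closed U" unfolding U_def
    using \<open>z0 \<in> ball 0 R\<close> by (intro continuous_closed_preimage cont) auto
  moreover have "ball 0 (norm z0) \<subseteq> U"
    using below by (auto simp: U_def less_imp_le)
  ultimately have "closure (ball 0 (norm z0)) \<subseteq> U"
    by (rule closure_minimal[rotated])
  hence atmost: "cmod (q z) \<le> M" if "z \<in> cball 0 (norm z0)" for z
    using that \<open>z0 \<noteq> 0\<close> by (auto simp: U_def)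
  moreover have "cmod (q z0) = M" using atmost[of z0] z0T by (simp add: T_def)
  ultimately show ?thesis using that \<open>z0 \<in> ball 0 R\<close> \<open>z0 \<noteq> 0\<close> by blast
qed

lemma jack_lemma:
  fixes Q :: "complex \<Rightarrow> complex"
  assumes Q: "Q holomorphic_on ball 0 R" and n: "n \<ge> 1" and M: "M > 0"
    and z1: "z1 \<in> ball 0 R" "M \<le> cmod (z1 ^ n * Q z1)"
  obtains z0 k where "z0 \<in> ball 0 R" "z0 \<noteq> 0" "cmod (z0 ^ n * Q z0) = M" "real n \<le> k"
    "z0 * deriv (\<lambda>z. z ^ n * Q z) z0 = of_real k * (z0 ^ n * Q z0)"
proof -
  have "continuous_on (ball 0 R) (\<lambda>z. z ^ n * Q z)"
    using Q by (intro holomorphic_on_imp_continuous_on holomorphic_intros) auto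
  moreover have "cmod (0 ^ n * Q 0) < M" using n M by (simp add: zero_power)
  ultimately obtain z0 where z0: "z0 \<in> ball 0 R" "z0 \<noteq> 0" and qz0: "cmod (z0 ^ n * Q z0) = M"
    and atmost: "\<And>z. z \<in> cball 0 (norm z0) \<Longrightarrow> cmod (z ^ n * Q z) \<le> M"
    using extremal_point_of_level_set z1 by blast
  define r where "r = norm z0"
  have "r > 0" using z0 by (simp add: r_def)
  have sub: "cball 0 r \<subseteq> ball 0 R" using z0 by (auto simp: r_def)
  have Qz0: "r ^ n * cmod (Q z0) = M"
    using qz0 by (simp add: r_def norm_mult norm_power)
  have Qmax: "cmod (Q z) \<le> cmod (Q z0)" if "z \<in> cball 0 r" for z
  proof (rule maximum_modulus_frontier[of Q "cball 0 r"])
    show "Q holomorphic_on interior (cball 0 r)"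
      using holomorphic_on_subset[OF Q order_trans[OF ball_subset_cball sub]] by simp
    show "continuous_on (closure (cball 0 r)) Q"
      using holomorphic_on_imp_continuous_on[OF holomorphic_on_subset[OF Q sub]] by simp
  next
    fix w :: complex assume "w \<in> frontier (cball 0 r)"
    hence w: "norm w = r" using \<open>r > 0\<close> by (simp add: frontier_cball)
    hence "r ^ n * cmod (Q w) \<le> M" using atmost[of w] by (simp add: r_def norm_mult norm_power)
    thus "cmod (Q w) \<le> cmod (Q z0)"
      using Qz0 \<open>r > 0\<close> by (metis mult_le_cancel_left_pos zero_less_power)
  qed (use that in auto)
  have "Q z0 \<noteq> 0" using Qz0 M \<open>r > 0\<close> by auto
  then obtain k where "k \<ge> 0" and k: "z0 * deriv Q z0 = of_real k * Q z0"
    using logderiv_nonneg_at_boundary_max[OF Q _ sub _ _ Qmax] by (auto simp: r_def)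
  have "z0 * deriv (\<lambda>z. z ^ n * Q z) z0 = z0 ^ n * (of_nat n * Q z0 + z0 * deriv Q z0)"
    using Q z0 by (intro z_times_deriv_power_mult[where c = 0]) auto
  also have "\<dots> = of_real (real n + k) * (z0 ^ n * Q z0)"
    by (simp add: k algebra_simps)
  finally show ?thesis
    using that z0 qz0 \<open>k \<ge> 0\<close> by (metis le_add_same_cancel1)
qed

lemma power_series_tail_factor:
  fixes a :: "nat \<Rightarrow> complex" and h :: "complex \<Rightarrow> complex"
  assumes ser: "\<And>z. z \<in> ball 0 R \<Longrightarrow> (\<lambda>k. a (k + m) * z ^ (k + m)) sums h z"
  obtains g where "g holomorphic_on ball 0 R" "\<And>z. z \<in> ball 0 R \<Longrightarrow> h z = z ^ m * g z"
proof -
  define G where "G = Abs_fps (\<lambda>k. a (k + m))"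
  have "ereal R \<le> fps_conv_radius G"
    unfolding fps_conv_radius_def G_def fps_nth_Abs_fps
  proof (rule conv_radius_geI_ex')
    fix r :: real assume r: "0 < r" "ereal r < ereal R"
    hence "of_real r \<in> ball (0::complex) R" by simp
    from summable_mult2[OF sums_summable[OF ser[OF this]], of "1 / of_real r ^ m"]
    have "summable (\<lambda>k. a (k + m) * of_real r ^ (k + m) * (1 / of_real r ^ m))" .
    moreover have "(\<lambda>k. a (k + m) * of_real r ^ (k + m) * (1 / of_real r ^ m))
                   = (\<lambda>k. a (k + m) * of_real r ^ k)"
      using r by (simp add: power_add)
    ultimately show "summable (\<lambda>k. a (k + m) * of_real r ^ k)" by (simp only:)
  qed
  hence conv: "norm z < fps_conv_radius G" if "z \<in> ball 0 R" for z
    using that by (auto intro: order_less_le_trans[of _ "ereal R"])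
  show ?thesis
  proof
    show "eval_fps G holomorphic_on ball 0 R"
      using conv by (intro holomorphic_on_eval_fps) auto
  next
    fix z :: complex assume z: "z \<in> ball 0 R"
    from sums_mult[OF sums_eval_fps[OF conv[OF z]], of "z ^ m"]
    have "(\<lambda>k. a (k + m) * z ^ (k + m)) sums (z ^ m * eval_fps G z)"
      by (simp add: G_def power_add algebra_simps)
    with ser[OF z] show "h z = z ^ m * eval_fps G z" by (rule sums_unique2)
  qed
qed

lemma Flam_power_factor:
  fixes f g :: "complex \<Rightarrow> complex"
  assumes g: "g holomorphic_on S" and S: "open S"
    and f: "\<And>w. w \<in> S \<Longrightarrow> f w = w ^ p * (1 + w ^ n * g w)"
  obtains K where "K holomorphic_on S"
    "\<And>w. w \<in> S \<Longrightarrow> Flam lam f w = w ^ p * (of_real (1 - lam + lam * real p) + w ^ n * K w)"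
proof
  define c :: complex where "c = of_real (1 - lam + lam * real p)"
  define h where "h w = 1 + w ^ n * g w" for w
  show "(\<lambda>w. c * g w + of_real lam * (of_nat n * g w + w * deriv g w)) holomorphic_on S"
    using g S by (intro holomorphic_intros) auto
  fix w assume w: "w \<in> S"
  have "h holomorphic_on S" unfolding h_def using g by (intro holomorphic_intros)
  hence zf': "w * deriv f w = w ^ p * (of_nat p * h w + w * deriv h w)"
    using S w f by (intro z_times_deriv_power_mult[of h _ _ _ 0]) (auto simp: h_def)
  have zh': "w * deriv h w = w ^ n * (of_nat n * g w + w * deriv g w)"
    using g S w by (intro z_times_deriv_power_mult[where c = 1]) (auto simp: h_def)
  have "Flam lam f w = (1 - of_real lam) * f w + of_real lam * (w * deriv f w)"
    by (simp add: Flam_def mult.assoc)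
  also have "\<dots> = w ^ p * (c * h w + of_real lam * (w * deriv h w))"
    unfolding zf' f[OF w] by (simp add: c_def h_def algebra_simps)
  also have "\<dots> = w ^ p * (of_real (1 - lam + lam * real p)
          + w ^ n * (c * g w + of_real lam * (of_nat n * g w + w * deriv g w)))"
    unfolding zh' by (simp add: c_def h_def algebra_simps)
  finally show "Flam lam f w = \<dots>" .
qed

lemma quotient_power_factor:
  fixes F K :: "complex \<Rightarrow> complex"
  assumes K: "K holomorphic_on S" and S: "open S" "0 \<in> S"
    and n: "n \<ge> 1" and p: "p \<ge> 1" and c: "c \<noteq> 0"
    and F: "\<And>w. w \<in> S \<Longrightarrow> F w = w ^ p * (c + w ^ n * K w)"
    and nz: "\<And>w. w \<in> S - {0} \<Longrightarrow> w * deriv F w \<noteq> 0"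
  obtains Q where "Q holomorphic_on S"
    "\<And>w. w \<in> S - {0} \<Longrightarrow> F w / (w * deriv F w) - 1 / of_nat p = w ^ n * Q w"
proof
  define H where "H w = c + w ^ n * K w" for w
  define L where "L w = of_nat n * K w + w * deriv K w" for w
  define D where "D w = of_nat p * H w + w ^ n * L w" for w
  have H: "H holomorphic_on S" unfolding H_def using K by (intro holomorphic_intros)
  have L: "L holomorphic_on S" unfolding L_def using K S by (intro holomorphic_intros)
  have D: "D holomorphic_on S" unfolding D_def using H L by (intro holomorphic_intros)
  have zF': "w * deriv F w = w ^ p * D w" if w: "w \<in> S" for w
  proof -
    have "w * deriv F w = w ^ p * (of_nat p * H w + w * deriv H w)"
      using H S w F by (intro z_times_deriv_power_mult[of H _ _ _ 0]) (auto simp: H_def)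
    moreover have "w * deriv H w = w ^ n * L w"
      unfolding L_def using K S w by (intro z_times_deriv_power_mult) (auto simp: H_def)
    ultimately show ?thesis by (simp add: D_def)
  qed
  have D_nz: "D w \<noteq> 0" if w: "w \<in> S" for w
  proof (cases "w = 0")
    case True
    thus ?thesis using n p c by (simp add: D_def H_def zero_power)
  next
    case False
    thus ?thesis using nz[of w] zF'[OF w] w by auto
  qed
  show "(\<lambda>w. - L w / (of_nat p * D w)) holomorphic_on S"
    using L D D_nz p by (intro holomorphic_intros) auto
  fix w assume w: "w \<in> S - {0}"
  have "F w / (w * deriv F w) = H w / D w"
    using w F zF' by (simp add: H_def)
  also have "\<dots> - 1 / of_nat p = (of_nat p * H w - D w) / (of_nat p * D w)"
    using D_nz[of w] w p by (simp add: field_simps)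
  also have "\<dots> = w ^ n * (- L w / (of_nat p * D w))"
    by (simp add: D_def)
  finally show "F w / (w * deriv F w) - 1 / of_nat p = w ^ n * (- L w / (of_nat p * D w))" .
qed

lemma Flam_quotient_factor:
  fixes f :: "complex \<Rightarrow> complex" and a :: "nat \<Rightarrow> complex"
  assumes R: "R > 0" and n: "n \<ge> 1" and p: "p \<ge> 1" and lam: "0 \<le> lam"
    and ser: "\<And>z. z \<in> ball 0 R \<Longrightarrow> (\<lambda>k. a (k + p + n) * z ^ (k + p + n)) sums (f z - z ^ p)"
    and nz: "\<And>z. z \<in> ball 0 R - {0} \<Longrightarrow> Flam lam f z * deriv (Flam lam f) z \<noteq> 0"
  obtains Q where "Q holomorphic_on ball 0 R"
    "\<And>z. z \<in> ball 0 R - {0} \<Longrightarrow>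
       Flam lam f z / (z * deriv (Flam lam f) z) - 1 / of_nat p = z ^ n * Q z"
proof -
  have "\<And>z. z \<in> ball 0 R \<Longrightarrow> (\<lambda>k. a (k + (p + n)) * z ^ (k + (p + n))) sums (f z - z ^ p)"
    using ser by (simp add: add.assoc)
  then obtain g where g: "g holomorphic_on ball 0 R"
    and fg: "\<And>z. z \<in> ball 0 R \<Longrightarrow> f z - z ^ p = z ^ (p + n) * g z"
    using power_series_tail_factor[where h = "\<lambda>z. f z - z ^ p" and m = "p + n"] by blast
  have "f z = z ^ p * (1 + z ^ n * g z)" if "z \<in> ball 0 R" for z
    using fg[OF that] by (simp add: power_add algebra_simps)
  then obtain K where K: "K holomorphic_on ball 0 R"
    and FK: "\<And>z. z \<in> ball 0 R \<Longrightarrow>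
               Flam lam f z = z ^ p * (of_real (1 - lam + lam * real p) + z ^ n * K z)"
    using Flam_power_factor[OF g open_ball] by metis
  have "1 - lam + lam * real p \<ge> 1" using lam p by (simp add: mult_le_cancel_left1)
  hence "(of_real (1 - lam + lam * real p) :: complex) \<noteq> 0"
    unfolding of_real_eq_0_iff by linarith
  moreover have "z * deriv (Flam lam f) z \<noteq> 0" if "z \<in> ball 0 R - {0}" for z
    using nz[OF that] that by simp
  ultimately show ?thesis
    using quotient_power_factor[OF K open_ball _ n p] FK R that by auto
qed

lemma logderiv_F_div_z_deriv_F:
  fixes F q :: "complex \<Rightarrow> complex"
  assumes F: "F holomorphic_on S" and S: "open S" "z \<in> S"
    and q: "\<And>w. w \<in> S \<Longrightarrow> q w = F w / (w * deriv F w) - c"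
    and nz: "z \<noteq> 0" "F z \<noteq> 0" "deriv F z \<noteq> 0"
  shows "z * deriv q z / (q z + c) = z * deriv F z / F z - 1 - z * deriv (deriv F) z / deriv F z"
proof -
  define W where "W = (deriv F z * (z * deriv F z) - F z * (deriv F z + z * deriv (deriv F) z))
                       / ((z * deriv F z) * (z * deriv F z))"
  have F': "(F has_field_derivative deriv F z) (at z)"
    using F S by (auto intro!: holomorphic_derivI)
  have "(deriv F has_field_derivative deriv (deriv F) z) (at z)"
    using F S by (auto intro!: holomorphic_derivI holomorphic_deriv)
  hence "((\<lambda>w. w * deriv F w) has_field_derivative deriv F z + z * deriv (deriv F) z) (at z)"
    by (auto intro!: derivative_eq_intros)
  from DERIV_diff[OF DERIV_divide[OF F' this] DERIV_const[of c]]
  have "((\<lambda>w. F w / (w * deriv F w) - c) has_field_derivative W) (at z)"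
    using nz by (simp add: W_def)
  hence "(q has_field_derivative W) (at z)"
    by (rule has_field_derivative_transform_within_open[OF _ S]) (simp add: q)
  hence dq: "deriv q z = W" by (rule DERIV_imp_deriv)
  have qz: "q z + c = F z / (z * deriv F z)" using q[OF S(2)] by simp
  show ?thesis unfolding dq qz W_def using nz by (simp add: field_simps)
qed

lemma F_div_z_deriv_F_bound:
  fixes F Q :: "complex \<Rightarrow> complex" and n p :: nat and M :: real
  assumes F: "F holomorphic_on ball 0 R" and Q: "Q holomorphic_on ball 0 R"
    and n: "n \<ge> 1" and Mp: "1 \<le> M * p"
    and nz: "\<And>z. z \<in> ball 0 R - {0} \<Longrightarrow> F z * deriv F z \<noteq> 0"
    and FQ: "\<And>z. z \<in> ball 0 R - {0} \<Longrightarrow> F z / (z * deriv F z) - 1 / of_nat p = z ^ n * Q z"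
    and cond: "\<And>z. z \<in> ball 0 R - {0} \<Longrightarrow>
      Re (z * deriv F z / F z - 1 - z * deriv (deriv F) z / deriv F z)
        < real n * M * real p / (M * real p + 1)"
    and z: "z \<in> ball 0 R - {0}"
  shows "cmod (F z / (z * deriv F z) - 1 / of_nat p) < M"
proof (rule ccontr)
  have "M > 0"
    using Mp mult_nonpos_nonneg[of M "real p"] by (cases "M > 0") auto
  assume "\<not> ?thesis"
  hence "M \<le> cmod (z ^ n * Q z)" using FQ[OF z] by simp
  with jack_lemma[OF Q n \<open>M > 0\<close>] z
  obtain z0 k where "z0 \<in> ball 0 R" "z0 \<noteq> 0" and qz0: "cmod (z0 ^ n * Q z0) = M"
    and "real n \<le> k" and k: "z0 * deriv (\<lambda>w. w ^ n * Q w) z0 = of_real k * (z0 ^ n * Q z0)"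
    by blast
  hence z0: "z0 \<in> ball 0 R - {0}" by simp
  have logderiv: "z0 * deriv (\<lambda>w. w ^ n * Q w) z0 / (z0 ^ n * Q z0 + 1 / of_nat p)
      = z0 * deriv F z0 / F z0 - 1 - z0 * deriv (deriv F) z0 / deriv F z0"
    using nz[OF z0] z0 F
    by (intro logderiv_F_div_z_deriv_F[where S = "ball 0 R - {0}"]) (auto simp: FQ)
  have "z0 ^ n * Q z0 + 1 / of_nat p \<noteq> 0"
    using FQ[OF z0, symmetric] nz[OF z0] z0 by simp
  hence "k * (M * p / (M * p + 1)) \<le> Re (of_real k * (z0 ^ n * Q z0) / (z0 ^ n * Q z0 + 1 / of_nat p))"
    using \<open>real n \<le> k\<close> by (intro Re_mult_div_add_inverse_ge[OF qz0 Mp]) auto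
  also have "\<dots> = Re (z0 * deriv F z0 / F z0 - 1 - z0 * deriv (deriv F) z0 / deriv F z0)"
    unfolding logderiv[symmetric] k ..
  finally have "k * (M * p / (M * p + 1)) \<le> \<dots>" .
  moreover have "real n * (M * p / (M * p + 1)) \<le> k * (M * p / (M * p + 1))"
    using \<open>real n \<le> k\<close> Mp by (intro mult_right_mono) auto
  ultimately show False using cond[OF z0] by simp
qed

theorem corollary3p13:
  fixes n p :: nat and lam M :: real and f :: "complex \<Rightarrow> complex" and a :: "nat \<Rightarrow> complex"
  assumes n: "n \<ge> 1" and p: "p \<ge> 1"
    and lam: "0 \<le> lam" "lam \<le> 1"
    and hol: "f holomorphic_on ball 0 1"
    and ser: "\<And>z. z \<in> ball 0 1 \<Longrightarrow>
               (\<lambda>k. a (k + p + n) * z ^ (k + p + n)) sums (f z - z ^ p)"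
    and nz: "\<And>z. z \<in> ball 0 1 - {0} \<Longrightarrow>
               Flam lam f z * deriv (Flam lam f) z \<noteq> 0"
    and M: "M \<ge> 1 / real p"
    and cond: "\<And>z. z \<in> ball 0 1 - {0} \<Longrightarrow>
      Re (z * deriv (Flam lam f) z / Flam lam f z - 1
          - z * deriv (deriv (Flam lam f)) z / deriv (Flam lam f) z)
        < real n * M * real p / (M * real p + 1)"
  shows "\<And>z. z \<in> ball 0 1 - {0} \<Longrightarrow>
      cmod (Flam lam f z / (z * deriv (Flam lam f) z) - 1 / of_nat p) < M"
proof -
  have "1 \<le> M * p" using M p by (simp add: field_simps)
  moreover obtain Q where "Q holomorphic_on ball 0 1"
    and "\<And>z. z \<in> ball 0 1 - {0} \<Longrightarrow>
           Flam lam f z / (z * deriv (Flam lam f) z) - 1 / of_nat p = z ^ n * Q z"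
    using Flam_quotient_factor[OF zero_less_one n p lam(1) ser nz] by blast
  moreover have "Flam lam f holomorphic_on ball 0 1"
    unfolding Flam_def using hol by (auto intro!: holomorphic_intros)
  ultimately show "\<And>z. z \<in> ball 0 1 - {0} \<Longrightarrow>
      cmod (Flam lam f z / (z * deriv (Flam lam f) z) - 1 / of_nat p) < M"
    using F_div_z_deriv_F_bound n nz cond by blast
qed

end
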